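(* Let $n\ge3$. For an SSM-recurrent configuration $c$ on $W_n$ with $\Phi_W(c)=(\mathcal O,M)$, let $S(\Phi_W(c))$ be the subgraph of $C_n$ whose vertex set is $\{i\in[n]: \text{the edge }\{i,i+1\}\text{ is directed } i+1\to i \text{ in } \mathcal O\}$ and whose edge set is $\{\{i-1,i\}: i\in M\}$. Then $c\mapsto S(\Phi_W(c))$ is a bijection from the set of SSM-recurrent configurations on $W_n$ onto $\mathrm{Sub}(C_n)$. Under this bijection, $\mathrm{level}(c)$ equals the number of edges of the subgraph, and $\mathrm{weight}^{01^*}(c)$ equals the number of vertices of $C_n$ not in the subgraph.
   Context: $C_n$: cycle on $[n]$ with edges $\{i,i+1\}$ (indices mod $n$, vertices clockwise); $W_n$: $C_n$ plus sink $0$ adjacent to all of $[n]$. $\mathrm{Sub}(C_n)$ is the set of subgraphs $(A,E_A)$ with $A\subseteq[n]$ non-empty and $E_A$ a set of edges of $C_n$ with both endpoints in $A$. Stable configurations on $W_n$: $\{0,1,2\}^n$. SSM (parameter $p\in(0,1)$: a toppling vertex sends a grain to each neighbour independently with probability $p$, grains to the sink vanish); Markov chain: add a grain at a random vertex, stabilise; SSM-recurrent = recurrent state; known: stable $c$ is SSM-recurrent iff for all $i,j$ with $c_i=c_j=0$ some $k\in(i,j)$ has $c_k=2$, $(i,j)$ being the vertices strictly between $i$ and $j$ clockwise from $i$ ($(i,i)=[n]\setminus\{i\}$). $\mathrm{level}(c)=\sum_i c_i-n$. Cyclically first maximal vertex: $c_i=2$ and some $j$ has $c_j=0$ and $c_k=1$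 for all $k\in(j,i)$. $m(c)$: $m(c)_i=0$ if $c_i=0$, $2$ if $i$ cyclically first maximal, $1$ otherwise. For $c'=m(c)$, $\mathcal O(c')$ is the unique orientation of $C_n$ with in-degree $c'_i$ at each $i$ if $c'\ne(1,\ldots,1)$, and the counter-clockwise cycle ($i+1\to i$ for all $i$) otherwise. $\Phi_W(c)=(\mathcal O(m(c)),M)$ with $M$ the set of $i$ with $c_i=2$ not cyclically first maximal. $\mathrm{weight}^{01^*}(c)$ is the number of vertices $i$ such that $c_i=0$, or $c_i=1$ and there is $j$ with $c_j=0$ and $c_k=1$ for all $k$ in the clockwise half-open interval $(j,i]$. *)

theory Defs
  imports Main
begin

text \<open>Vertices of the cycle C_n are 0,...,n-1 (standing for [n]); the clockwise
successor of i is (i+1) mod n. The sink of W_n is not represented.\<close>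

definition cyc_succ :: "nat \<Rightarrow> nat \<Rightarrow> nat" where
  "cyc_succ n i = (i + 1) mod n"

definition cyc_pred :: "nat \<Rightarrow> nat \<Rightarrow> nat" where
  "cyc_pred n i = (i + n - 1) mod n"

definition cyc_dist :: "nat \<Rightarrow> nat \<Rightarrow> nat \<Rightarrow> nat" where
  "cyc_dist n i j = (if i = j then n else (j + n - i) mod n)"

text \<open>Open clockwise interval (i,j); (i,i) = [n] minus i.\<close>
definition open_int :: "nat \<Rightarrow> nat \<Rightarrow> nat \<Rightarrow> nat set" where
  "open_int n i j = {(i + k) mod n | k. 0 < k \<and> k < cyc_dist n i j}"

definition halfopen_int :: "nat \<Rightarrow> nat \<Rightarrow> nat \<Rightarrow> nat set" where
  "halfopen_int n j i = {(j + k) mod n | k. 0 < k \<and> k \<le> cyc_dist n j i}"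

definition stable_configs :: "nat \<Rightarrow> (nat \<Rightarrow> nat) set" where
  "stable_configs n = {c. (\<forall>i<n. c i \<le> 2) \<and> (\<forall>i\<ge>n. c i = 0)}"

text \<open>SSM-recurrent stable configurations, via the known characterisation.\<close>
definition SSM_recurrent :: "nat \<Rightarrow> (nat \<Rightarrow> nat) set" where
  "SSM_recurrent n = {c \<in> stable_configs n.
     \<forall>i<n. \<forall>j<n. c i = 0 \<and> c j = 0 \<longrightarrow> (\<exists>k \<in> open_int n i j. c k = 2)}"

definition level :: "nat \<Rightarrow> (nat \<Rightarrow> nat) \<Rightarrow> int" where
  "level n c = (\<Sum>i<n. int (c i)) - int n"

definition cyc_first_max :: "nat \<Rightarrow> (nat \<Rightarrow> nat) \<Rightarrow> nat \<Rightarrow> bool" where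
  "cyc_first_max n c i \<longleftrightarrow> i < n \<and> c i = 2 \<and>
     (\<exists>j<n. c j = 0 \<and> (\<forall>k \<in> open_int n j i. c k = 1))"

definition mconf :: "nat \<Rightarrow> (nat \<Rightarrow> nat) \<Rightarrow> (nat \<Rightarrow> nat)" where
  "mconf n c = (\<lambda>i. if i < n then (if c i = 0 then 0 else if cyc_first_max n c i then 2 else 1)
                    else 0)"

text \<open>Orientations of C_n: ori i = True iff the edge {i,i+1} is directed i+1 -> i
  (counter-clockwise), for i < n.\<close>
definition orientations :: "nat \<Rightarrow> (nat \<Rightarrow> bool) set" where
  "orientations n = {ori. \<forall>i\<ge>n. \<not> ori i}"

definition indeg :: "nat \<Rightarrow> (nat \<Rightarrow> bool) \<Rightarrow> nat \<Rightarrow> nat" where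
  "indeg n ori i = (if ori i then 1 else 0) + (if ori (cyc_pred n i) then 0 else 1)"

definition orient_of :: "nat \<Rightarrow> (nat \<Rightarrow> nat) \<Rightarrow> (nat \<Rightarrow> bool)" where
  "orient_of n c' = (if (\<forall>i<n. c' i = 1) then (\<lambda>i. i < n)
     else (THE ori. ori \<in> orientations n \<and> (\<forall>i<n. indeg n ori i = c' i)))"

definition Mset :: "nat \<Rightarrow> (nat \<Rightarrow> nat) \<Rightarrow> nat set" where
  "Mset n c = {i. i < n \<and> c i = 2 \<and> \<not> cyc_first_max n c i}"

definition PhiW :: "nat \<Rightarrow> (nat \<Rightarrow> nat) \<Rightarrow> (nat \<Rightarrow> bool) \<times> nat set" where
  "PhiW n c = (orient_of n (mconf n c), Mset n c)"

definition cycle_edges :: "nat \<Rightarrow> nat set set" where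
  "cycle_edges n = {{i, cyc_succ n i} | i. i < n}"

definition Sub :: "nat \<Rightarrow> (nat set \<times> nat set set) set" where
  "Sub n = {(A, E). A \<subseteq> {..<n} \<and> A \<noteq> {} \<and> E \<subseteq> cycle_edges n \<and> (\<forall>e\<in>E. e \<subseteq> A)}"

definition Sgraph :: "nat \<Rightarrow> (nat \<Rightarrow> bool) \<times> nat set \<Rightarrow> nat set \<times> nat set set" where
  "Sgraph n OM = ({i. i < n \<and> fst OM i}, (\<lambda>i. {cyc_pred n i, i}) ` snd OM)"

definition weight01 :: "nat \<Rightarrow> (nat \<Rightarrow> nat) \<Rightarrow> nat" where
  "weight01 n c = card {i. i < n \<and> (c i = 0 \<or>
      (c i = 1 \<and> (\<exists>j<n. c j = 0 \<and> (\<forall>k \<in> halfopen_int n j i. c k = 1))))}"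

end

theory Submission
  imports Defs
begin

text \<open>Say that i lies in a zero run of c if c i = 0, or c i = 1 and the maximal block of 1s
  ending at i is preceded by a 0; weight^{01*} counts exactly these vertices. For recurrent c,
  O(m(c)) directs {i, i+1} counter-clockwise precisely when i is not in a zero run: giving these
  edges that direction yields in-degrees m(c), and an orientation of C_n is determined by its
  in-degrees together with the direction of a single edge, which is forced at a 0 of c.
  So the vertex set A of S(\<Phi>_W(c)) is the complement of the zero runs, and c is recovered
  from (A, E) as c i = [i \<in> A] + [i - 1 \<notin> A] + [{i - 1, i} \<in> E], the in-degree m(c) i plus the
  indicator of M. This configuration is recurrent since between two 0s the cycle must enter A
  somewhere, and there c = 2. In-degrees sum to n, which gives the level.\<close>

lemma cyc_pred_eq: "i < n \<Longrightarrow> cyc_pred n i = (if i = 0 then n - 1 else i - 1)"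
  unfolding cyc_pred_def
  by (cases i) (simp_all add: add.commute[of n])

lemma cyc_succ_eq: "i < n \<Longrightarrow> cyc_succ n i = (if Suc i = n then 0 else Suc i)"
  by (simp add: cyc_succ_def)

lemma cyc_pred_less: "0 < n \<Longrightarrow> cyc_pred n i < n"
  by (simp add: cyc_pred_def)

lemma cyc_succ_less: "0 < n \<Longrightarrow> cyc_succ n i < n"
  by (simp add: cyc_succ_def)

lemma cyc_pred_succ: "i < n \<Longrightarrow> cyc_pred n (cyc_succ n i) = i"
  by (auto simp: cyc_succ_eq cyc_pred_eq)

lemma cyc_succ_pred: "i < n \<Longrightarrow> cyc_succ n (cyc_pred n i) = i"
  by (auto simp: cyc_succ_eq cyc_pred_eq)

lemma cyc_pred_Suc_mod: "0 < n \<Longrightarrow> cyc_pred n (Suc x mod n) = x mod n"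
  by (metis Suc_eq_plus1 cyc_pred_succ cyc_succ_def mod_Suc_eq mod_less_divisor)

lemma bij_betw_cyc_pred: "0 < n \<Longrightarrow> bij_betw (cyc_pred n) {..<n} {..<n}"
  by (rule bij_betw_byWitness[where f' = "cyc_succ n"])
     (auto simp: cyc_pred_succ cyc_succ_pred cyc_pred_less cyc_succ_less)

lemma cyc_dist_eq:
  assumes "i < n" "j < n"
  shows "cyc_dist n i j = (if i = j then n else if i < j then j - i else j + n - i)"
proof -
  have "i < j \<Longrightarrow> (j + n - i) mod n = j - i"
  proof -
    assume "i < j"
    then have "(j + n - i) mod n = (j - i + n) mod n"
      by (intro arg_cong[where f = "\<lambda>x. x mod n"]) simp
    with assms(2) show ?thesis
      by simp
  qed
  with assms show ?thesis
    by (simp add: cyc_dist_def)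
qed

lemma cyc_dist_bounds: "i < n \<Longrightarrow> j < n \<Longrightarrow> 0 < cyc_dist n i j \<and> cyc_dist n i j \<le> n"
  by (auto simp: cyc_dist_eq)

lemma add_cyc_dist_mod: "i < n \<Longrightarrow> j < n \<Longrightarrow> (i + cyc_dist n i j) mod n = j"
  by (auto simp: cyc_dist_eq)

lemma cyc_pred_induct [consumes 2, case_names anchor step]:
  assumes "i < n" "j < n" and "P j"
    and "\<And>i. i < n \<Longrightarrow> P (cyc_pred n i) \<Longrightarrow> P i"
  shows "P i"
proof -
  have "P ((j + t) mod n)" for t
  proof (induction t)
    case 0
    then show ?case using assms(2,3) by simp
  next
    case (Suc t)
    with assms(2) assms(4)[of "Suc (j + t) mod n"] show ?case
      by (simp add: cyc_pred_Suc_mod)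
  qed
  from this[of "cyc_dist n j i"] show ?thesis
    using add_cyc_dist_mod[OF assms(2,1)] by simp
qed

lemma open_int_subset: "0 < n \<Longrightarrow> open_int n j i \<subseteq> {..<n}"
  unfolding open_int_def by auto

lemma halfopen_int_eq_insert_open_int:
  assumes "i < n" "j < n"
  shows "halfopen_int n j i = insert i (open_int n j i)"
proof -
  have "\<And>k. (0 < k \<and> k \<le> cyc_dist n j i) = (0 < k \<and> k < cyc_dist n j i \<or> k = cyc_dist n j i)"
    using cyc_dist_bounds[OF assms(2,1)] by auto
  then have "halfopen_int n j i = open_int n j i \<union> {(j + cyc_dist n j i) mod n}"
    unfolding halfopen_int_def open_int_def by auto
  then show ?thesis
    using add_cyc_dist_mod[OF assms(2,1)] by auto
qed

lemma open_int_eq_halfopen_int_pred: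
  assumes "i < n" "j < n"
  shows "open_int n j i = (if j = cyc_pred n i then {} else halfopen_int n j (cyc_pred n i))"
proof -
  have "cyc_dist n j i = (if j = cyc_pred n i then 1 else Suc (cyc_dist n j (cyc_pred n i)))"
    using assms by (auto simp: cyc_dist_eq cyc_pred_eq)
  then show ?thesis
    unfolding open_int_def halfopen_int_def by (auto simp: less_Suc_eq_le)
qed

lemma ex_rise_in_open_int:
  assumes "i < n" "j < n" "\<not> P i" "P (cyc_pred n j)"
  shows "\<exists>k \<in> open_int n i j. \<not> P (cyc_pred n k) \<and> P k"
proof (rule ccontr)
  assume no_rise: "\<not> ?thesis"
  have "t < cyc_dist n i j \<longrightarrow> \<not> P ((i + t) mod n)" for t
  proof (induction t)
    case 0
    then show ?case using assms(1,3) by simp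
  next
    case (Suc t)
    have "Suc t < cyc_dist n i j \<Longrightarrow> Suc (i + t) mod n \<in> open_int n i j"
      unfolding open_int_def by force
    moreover have "cyc_pred n (Suc (i + t) mod n) = (i + t) mod n"
      using assms(1) by (simp add: cyc_pred_Suc_mod)
    ultimately show ?case
      unfolding add_Suc_right using Suc no_rise by (metis Suc_lessD)
  qed
  moreover have "cyc_pred n j = (i + (cyc_dist n i j - 1)) mod n"
    using cyc_pred_Suc_mod[of n "i + (cyc_dist n i j - 1)"] add_cyc_dist_mod[OF assms(1,2)]
      cyc_dist_bounds[OF assms(1,2)] by simp
  ultimately show False
    using assms(4) cyc_dist_bounds[OF assms(1,2)] by (metis diff_less zero_less_one)
qed

definition zero_run :: "nat \<Rightarrow> (nat \<Rightarrow> nat) \<Rightarrow> nat \<Rightarrow> bool" where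
  "zero_run n c i \<longleftrightarrow> c i = 0 \<or>
     (c i = 1 \<and> (\<exists>j<n. c j = 0 \<and> (\<forall>k \<in> halfopen_int n j i. c k = 1)))"

lemma weight01_eq_card_zero_run: "weight01 n c = card {i. i < n \<and> zero_run n c i}"
  unfolding weight01_def zero_run_def ..

lemma ex_zero_then_ones_iff_zero_run_pred:
  assumes "i < n"
  shows "(\<exists>j<n. c j = 0 \<and> (\<forall>k \<in> open_int n j i. c k = 1)) \<longleftrightarrow> zero_run n c (cyc_pred n i)"
proof -
  have pred: "cyc_pred n i < n"
    using assms by (simp add: cyc_pred_less)
  have "(\<forall>k \<in> open_int n j i. c k = 1) \<longleftrightarrow>
      j = cyc_pred n i \<or> c (cyc_pred n i) = 1 \<and> (\<forall>k \<in> halfopen_int n j (cyc_pred n i). c k = 1)"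
    if "j < n" for j
    using that assms pred
    by (auto simp: open_int_eq_halfopen_int_pred halfopen_int_eq_insert_open_int)
  then show ?thesis
    using pred unfolding zero_run_def by auto
qed

lemma zero_run_iff_pred:
  assumes "i < n"
  shows "zero_run n c i \<longleftrightarrow> c i = 0 \<or> c i = 1 \<and> zero_run n c (cyc_pred n i)"
proof -
  have "(\<forall>k \<in> halfopen_int n j i. c k = 1) \<longleftrightarrow> c i = 1 \<and> (\<forall>k \<in> open_int n j i. c k = 1)"
    if "j < n" for j
    using that assms by (simp add: halfopen_int_eq_insert_open_int)
  then have "zero_run n c i \<longleftrightarrow>
      c i = 0 \<or> c i = 1 \<and> (\<exists>j<n. c j = 0 \<and> (\<forall>k \<in> open_int n j i. c k = 1))"
    unfolding zero_run_def by auto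
  then show ?thesis
    using ex_zero_then_ones_iff_zero_run_pred[OF assms, of c] by simp
qed

lemma cyc_first_max_iff:
  "i < n \<Longrightarrow> cyc_first_max n c i \<longleftrightarrow> c i = 2 \<and> zero_run n c (cyc_pred n i)"
  unfolding cyc_first_max_def using ex_zero_then_ones_iff_zero_run_pred by auto

lemma Mset_eq: "Mset n c = {i. i < n \<and> c i = 2 \<and> \<not> zero_run n c (cyc_pred n i)}"
  unfolding Mset_def using cyc_first_max_iff by auto

lemma SSM_recurrent_le_2: "c \<in> SSM_recurrent n \<Longrightarrow> i < n \<Longrightarrow> c i \<le> 2"
  unfolding SSM_recurrent_def stable_configs_def by auto

lemma SSM_recurrent_outside: "c \<in> SSM_recurrent n \<Longrightarrow> n \<le> i \<Longrightarrow> c i = 0"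
  unfolding SSM_recurrent_def stable_configs_def by auto

lemma SSM_recurrent_zero_imp_not_zero_run_pred:
  assumes "c \<in> SSM_recurrent n" "i < n" "c i = 0"
  shows "\<not> zero_run n c (cyc_pred n i)"
proof
  assume "zero_run n c (cyc_pred n i)"
  then obtain j where "j < n" "c j = 0" "\<forall>k \<in> open_int n j i. c k = 1"
    using ex_zero_then_ones_iff_zero_run_pred[OF assms(2)] by blast
  with assms show False
    unfolding SSM_recurrent_def by fastforce
qed

lemma sum_indeg: "0 < n \<Longrightarrow> (\<Sum>i<n. indeg n ori i) = n"
proof -
  assume "0 < n"
  have "(\<Sum>i<n. if ori (cyc_pred n i) then 0 else 1) = (\<Sum>i<n. if ori i then 0 else 1::nat)"
    using sum.reindex_bij_betw[OF bij_betw_cyc_pred[OF \<open>0 < n\<close>]] by simp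
  then have "(\<Sum>i<n. indeg n ori i) = (\<Sum>i<n. (if ori i then 1 else 0) + (if ori i then 0 else 1::nat))"
    unfolding indeg_def sum.distrib by simp
  also have "\<dots> = (\<Sum>i<n. 1)"
    by (intro sum.cong) auto
  also have "\<dots> = n"
    by simp
  finally show ?thesis .
qed

lemma orientations_eqI:
  assumes "ori \<in> orientations n" "ori' \<in> orientations n"
    and "\<And>i. i < n \<Longrightarrow> indeg n ori i = indeg n ori' i"
    and "z < n" "ori z = ori' z"
  shows "ori = ori'"
proof
  fix i
  show "ori i = ori' i"
  proof (cases "i < n")
    case True
    from True \<open>z < n\<close> show ?thesis
    proof (induction i rule: cyc_pred_induct)
      case (step i)
      with assms(3)[of i] show ?case
        unfolding indeg_def by (auto split: if_splits)
    qed fact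
  next
    case False
    with assms(1,2) show ?thesis
      unfolding orientations_def by simp
  qed
qed

lemma indeg_not_zero_run:
  assumes "c \<in> SSM_recurrent n" "i < n"
  shows "indeg n (\<lambda>j. j < n \<and> \<not> zero_run n c j) i = mconf n c i"
proof -
  have "cyc_pred n i < n"
    using assms(2) by (simp add: cyc_pred_less)
  moreover have "c i = 0 \<or> c i = 1 \<or> c i = 2"
    using SSM_recurrent_le_2[OF assms] by auto
  ultimately show ?thesis
    using SSM_recurrent_zero_imp_not_zero_run_pred[OF assms] zero_run_iff_pred[OF assms(2), of c]
      cyc_first_max_iff[OF assms(2), of c] assms(2)
    by (auto simp: indeg_def mconf_def)
qed

lemma orient_of_mconf:
  assumes "c \<in> SSM_recurrent n"
  shows "orient_of n (mconf n c) = (\<lambda>i. i < n \<and> \<not> zero_run n c i)"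
proof (cases "\<exists>z<n. c z = 0")
  case True
  then obtain z where z: "z < n" "c z = 0"
    by blast
  let ?ori = "\<lambda>i. i < n \<and> \<not> zero_run n c i"
  have ori: "?ori \<in> orientations n \<and> (\<forall>i<n. indeg n ?ori i = mconf n c i)"
    using indeg_not_zero_run[OF assms] unfolding orientations_def by simp
  have uniq: "ori' = ?ori" if "ori' \<in> orientations n \<and> (\<forall>i<n. indeg n ori' i = mconf n c i)" for ori'
  proof (rule orientations_eqI[OF _ _ _ z(1)])
    show "ori' z = ?ori z"
      using that z unfolding indeg_def mconf_def zero_run_def by (auto split: if_splits)
  qed (use that ori in auto)
  have "(THE ori. ori \<in> orientations n \<and> (\<forall>i<n. indeg n ori i = mconf n c i)) = ?ori"
    using ori uniq by (rule the_equality)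
  moreover have "\<not> (\<forall>i<n. mconf n c i = 1)"
    using z unfolding mconf_def by auto
  ultimately show ?thesis
    unfolding orient_of_def by (simp only: if_False)
next
  case False
  then show ?thesis
    unfolding orient_of_def mconf_def cyc_first_max_def zero_run_def by auto
qed

lemma SSM_recurrent_eq_mconf_plus_Mset:
  assumes "c \<in> SSM_recurrent n" "i < n"
  shows "c i = mconf n c i + (if i \<in> Mset n c then 1 else 0)"
  using SSM_recurrent_le_2[OF assms] cyc_first_max_iff[OF assms(2), of c] assms(2)
  unfolding mconf_def Mset_def by auto

abbreviation pred_edge :: "nat \<Rightarrow> nat \<Rightarrow> nat set" where
  "pred_edge n i \<equiv> {cyc_pred n i, i}"

lemma cycle_edges_eq_image_pred_edge:
  assumes "0 < n"
  shows "cycle_edges n = pred_edge n ` {..<n}"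
proof (intro equalityI subsetI)
  fix e
  assume "e \<in> cycle_edges n"
  then obtain i where "i < n" "e = {i, cyc_succ n i}"
    unfolding cycle_edges_def by blast
  then have "e = pred_edge n (cyc_succ n i)"
    by (simp add: cyc_pred_succ)
  then show "e \<in> pred_edge n ` {..<n}"
    using cyc_succ_less[OF assms] by blast
next
  fix e
  assume "e \<in> pred_edge n ` {..<n}"
  then obtain i where "i < n" "e = pred_edge n i"
    by blast
  then have "e = {cyc_pred n i, cyc_succ n (cyc_pred n i)}"
    by (simp add: cyc_succ_pred)
  then show "e \<in> cycle_edges n"
    unfolding cycle_edges_def using cyc_pred_less[OF assms] by blast
qed

lemma inj_on_pred_edge: "3 \<le> n \<Longrightarrow> inj_on (pred_edge n) {..<n}"
proof (rule inj_onI)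
  fix a b
  assume n: "3 \<le> n" and ab: "a \<in> {..<n}" "b \<in> {..<n}" "pred_edge n a = pred_edge n b"
  then have "a = b \<or> cyc_pred n a = b \<and> a = cyc_pred n b"
    by (auto simp: doubleton_eq_iff)
  with n ab(1,2) show "a = b"
    by (auto simp: cyc_pred_eq split: if_splits)
qed

lemma Sgraph_PhiW:
  assumes "c \<in> SSM_recurrent n"
  shows "Sgraph n (PhiW n c) = ({i. i < n \<and> \<not> zero_run n c i}, pred_edge n ` Mset n c)"
  unfolding Sgraph_def PhiW_def orient_of_mconf[OF assms] by simp

lemma Sgraph_PhiW_in_Sub:
  assumes "0 < n" "c \<in> SSM_recurrent n"
  shows "Sgraph n (PhiW n c) \<in> Sub n"
proof -
  have "\<exists>i<n. \<not> zero_run n c i"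
  proof (cases "\<exists>z<n. c z = 0")
    case True
    then obtain z where "z < n" "c z = 0"
      by blast
    with assms(2) obtain k where "k \<in> open_int n z z" "c k = 2"
      unfolding SSM_recurrent_def by blast
    with open_int_subset[OF assms(1)] show ?thesis
      unfolding zero_run_def by force
  next
    case False
    with assms(1) show ?thesis
      unfolding zero_run_def by auto
  qed
  moreover have "pred_edge n ` Mset n c \<subseteq> cycle_edges n"
    using assms(1) by (auto simp: cycle_edges_eq_image_pred_edge Mset_def)
  moreover have "pred_edge n i \<subseteq> {i. i < n \<and> \<not> zero_run n c i}" if "i \<in> Mset n c" for i
    using that assms(1) by (auto simp: Mset_eq zero_run_def cyc_pred_less)
  ultimately show ?thesis
    unfolding Sgraph_PhiW[OF assms(2)] Sub_def by auto
qed

lemma level_eq_card_Mset: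
  assumes "0 < n" "c \<in> SSM_recurrent n"
  shows "level n c = int (card (Mset n c))"
proof -
  have "(\<Sum>i<n. c i) = (\<Sum>i<n. mconf n c i) + (\<Sum>i<n. if i \<in> Mset n c then 1 else 0)"
    using SSM_recurrent_eq_mconf_plus_Mset[OF assms(2)] by (simp add: sum.distrib)
  also have "(\<Sum>i<n. mconf n c i) = (\<Sum>i<n. indeg n (\<lambda>j. j < n \<and> \<not> zero_run n c j) i)"
    using indeg_not_zero_run[OF assms(2)] by simp
  also have "\<dots> = n"
    using sum_indeg[OF assms(1)] .
  also have "(\<Sum>i<n. if i \<in> Mset n c then 1 else 0) = card (Mset n c)"
    by (simp add: sum.If_cases Mset_def Int_def conj_commute)
  finally show ?thesis
    unfolding level_def by (simp flip: of_nat_sum)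
qed

definition subgraph_config :: "nat \<Rightarrow> nat set \<Rightarrow> nat set set \<Rightarrow> nat \<Rightarrow> nat" where
  "subgraph_config n A E i =
     (if i < n then indeg n (\<lambda>j. j \<in> A) i + (if pred_edge n i \<in> E then 1 else 0) else 0)"

lemma subgraph_config_Sgraph_PhiW:
  assumes "3 \<le> n" "c \<in> SSM_recurrent n"
  shows "subgraph_config n (fst (Sgraph n (PhiW n c))) (snd (Sgraph n (PhiW n c))) = c"
proof
  fix i
  show "subgraph_config n (fst (Sgraph n (PhiW n c))) (snd (Sgraph n (PhiW n c))) i = c i"
  proof (cases "i < n")
    case True
    have "Mset n c \<subseteq> {..<n}"
      by (auto simp: Mset_def)
    with True have "pred_edge n i \<in> pred_edge n ` Mset n c \<longleftrightarrow> i \<in> Mset n c"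
      by (simp add: inj_on_image_mem_iff[OF inj_on_pred_edge[OF assms(1)]])
    moreover have "(\<lambda>j. j \<in> {i. i < n \<and> \<not> zero_run n c i}) = (\<lambda>j. j < n \<and> \<not> zero_run n c j)"
      by simp
    ultimately show ?thesis
      using True SSM_recurrent_eq_mconf_plus_Mset[OF assms(2) True] indeg_not_zero_run[OF assms(2) True]
      unfolding subgraph_config_def Sgraph_PhiW[OF assms(2)] by simp
  next
    case False
    then show ?thesis
      using SSM_recurrent_outside[OF assms(2)] by (simp add: subgraph_config_def)
  qed
qed

lemma subgraph_config_SSM_recurrent:
  assumes "(A, E) \<in> Sub n"
  shows "subgraph_config n A E \<in> SSM_recurrent n"
proof -
  let ?c = "subgraph_config n A E"
  have edges_in_A: "pred_edge n i \<in> E \<Longrightarrow> cyc_pred n i \<in> A \<and> i \<in> A" for i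
    using assms unfolding Sub_def by blast
  have "?c \<in> stable_configs n"
    using edges_in_A unfolding stable_configs_def subgraph_config_def indeg_def by fastforce
  moreover have "\<exists>k \<in> open_int n i j. ?c k = 2"
    if ij: "i < n" "j < n" "?c i = 0" "?c j = 0" for i j
  proof -
    have "i \<notin> A" "cyc_pred n j \<in> A"
      using ij unfolding subgraph_config_def indeg_def by (auto split: if_splits)
    then obtain k where k: "k \<in> open_int n i j" "cyc_pred n k \<notin> A" "k \<in> A"
      using ex_rise_in_open_int[OF ij(1,2), of "\<lambda>k. k \<in> A"] by blast
    moreover have "k < n"
      using open_int_subset[of n i j] k(1) ij(1) by auto
    ultimately show ?thesis
      using edges_in_A[of k] unfolding subgraph_config_def indeg_def by auto
  qed
  ultimately show ?thesis
    unfolding SSM_recurrent_def by blast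
qed

lemma zero_run_subgraph_config:
  assumes "(A, E) \<in> Sub n" "x < n"
  shows "zero_run n (subgraph_config n A E) x \<longleftrightarrow> x \<notin> A"
proof -
  let ?c = "subgraph_config n A E"
  have A: "A \<subseteq> {..<n}" "A \<noteq> {}" "\<And>i. pred_edge n i \<in> E \<Longrightarrow> cyc_pred n i \<in> A \<and> i \<in> A"
    using assms(1) unfolding Sub_def by blast+
  have le_2: "?c i \<le> 2" if "i < n" for i
    using SSM_recurrent_le_2[OF subgraph_config_SSM_recurrent[OF assms(1)] that] .
  have not_in_A_iff_pred: "i \<notin> A \<longleftrightarrow> ?c i = 0 \<or> ?c i = 1 \<and> cyc_pred n i \<notin> A" if "i < n" for i
    using that A(3)[of i] unfolding subgraph_config_def indeg_def by auto
  obtain j where j: "j < n" "zero_run n ?c j \<longleftrightarrow> j \<notin> A"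
  proof (cases "\<exists>j<n. ?c j \<noteq> 1")
    case True
    then obtain j where "j < n" "?c j = 0 \<or> ?c j = 2"
      using le_2 by fastforce
    with not_in_A_iff_pred[of j] zero_run_iff_pred[of j n ?c] that show ?thesis
      by auto
  next
    case False
    obtain a where "a \<in> A" "a < n"
      using A(1,2) by blast
    with False that show ?thesis
      unfolding zero_run_def by auto
  qed
  from assms(2) j(1) show ?thesis
  proof (induction x rule: cyc_pred_induct)
    case anchor
    show ?case using j(2) .
  next
    case (step i)
    then show ?case
      using zero_run_iff_pred[of i n ?c] not_in_A_iff_pred[of i] by simp
  qed
qed

lemma Sgraph_PhiW_subgraph_config:
  assumes "(A, E) \<in> Sub n"
  shows "Sgraph n (PhiW n (subgraph_config n A E)) = (A, E)"
proof -
  let ?c = "subgraph_config n A E"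
  have A: "A \<subseteq> {..<n}" "A \<noteq> {}" "E \<subseteq> cycle_edges n"
    "\<And>i. pred_edge n i \<in> E \<Longrightarrow> cyc_pred n i \<in> A \<and> i \<in> A"
    using assms unfolding Sub_def by blast+
  then have n: "0 < n"
    by auto
  have "{i. i < n \<and> \<not> zero_run n ?c i} = A"
    using zero_run_subgraph_config[OF assms] A(1) by auto
  moreover have "Mset n ?c = {i. i < n \<and> pred_edge n i \<in> E}"
    using zero_run_subgraph_config[OF assms] A(4) cyc_pred_less[OF n]
    unfolding Mset_eq subgraph_config_def indeg_def by auto
  moreover have "pred_edge n ` {i. i < n \<and> pred_edge n i \<in> E} = E"
    using A(3) unfolding cycle_edges_eq_image_pred_edge[OF n] by auto
  ultimately show ?thesis
    using Sgraph_PhiW[OF subgraph_config_SSM_recurrent[OF assms]] by simp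
qed

theorem mainTheorem7:
  fixes n :: nat
  assumes "n \<ge> 3"
  shows "bij_betw (\<lambda>c. Sgraph n (PhiW n c)) (SSM_recurrent n) (Sub n)
    \<and> (\<forall>c \<in> SSM_recurrent n.
          level n c = int (card (snd (Sgraph n (PhiW n c))))
        \<and> weight01 n c = card ({..<n} - fst (Sgraph n (PhiW n c))))"
proof (intro conjI ballI)
  have n: "0 < n"
    using assms by simp
  show "bij_betw (\<lambda>c. Sgraph n (PhiW n c)) (SSM_recurrent n) (Sub n)"
    by (rule bij_betw_byWitness[where f' = "\<lambda>AE. subgraph_config n (fst AE) (snd AE)"])
      (auto simp: subgraph_config_Sgraph_PhiW[OF assms] Sgraph_PhiW_subgraph_config
         Sgraph_PhiW_in_Sub[OF n] subgraph_config_SSM_recurrent)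
  fix c
  assume c: "c \<in> SSM_recurrent n"
  have "card (pred_edge n ` Mset n c) = card (Mset n c)"
    using inj_on_pred_edge[OF assms] by (intro card_image, rule inj_on_subset) (auto simp: Mset_def)
  then show "level n c = int (card (snd (Sgraph n (PhiW n c))))"
    using level_eq_card_Mset[OF n c] Sgraph_PhiW[OF c] by simp
  have "{..<n} - {i. i < n \<and> \<not> zero_run n c i} = {i. i < n \<and> zero_run n c i}"
    by auto
  then show "weight01 n c = card ({..<n} - fst (Sgraph n (PhiW n c)))"
    using weight01_eq_card_zero_run Sgraph_PhiW[OF c] by simp
qed

end
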